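(* Let $k\ge 2$ be an integer, $0<\bar r\le k$ a residue, and $\mathcal{A}$ the alphabet of all positive integers congruent to $\bar r \pmod k$. If for all $n\ge 1$ we have $\mathfrak{D}_{\mathcal{A}} \bmod k^n=\mathbb{Z}/k^n\mathbb{Z}$, then $\mathcal{A}$ has no local obstructions.
   Context: For $a\in\mathbb{N}$ let $\gamma_a=\begin{pmatrix}0&1\\1&a\end{pmatrix}$ and let $\mathcal{G}_{\mathcal{A}}$ be the semigroup generated by $\gamma_a$, $a\in\mathcal{A}$ (products of one or more generators). $\mathfrak{D}_{\mathcal{A}}=\{\langle \gamma e_2,e_2\rangle:\gamma\in\mathcal{G}_{\mathcal{A}}\}$ is the set of lower-right entries of elements of $\mathcal{G}_{\mathcal{A}}$. An integer $d$ is admissible if for every $q\in\mathbb{N}$, $d \bmod q$ lies in $\mathfrak{D}_{\mathcal{A}}\bmod q$; $\mathcal{A}$ has no local obstructions if every integer is admissible. *)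

theory Defs
  imports "Jordan_Normal_Form.Matrix" "HOL-Number_Theory.Cong"
begin

definition gamma :: "nat \<Rightarrow> int mat" where
  "gamma a = mat_of_rows_list 2 [[0, 1], [1, int a]]"

inductive_set semigrp :: "nat set \<Rightarrow> int mat set" for A :: "nat set" where
  gen: "a \<in> A \<Longrightarrow> gamma a \<in> semigrp A"
| step: "g \<in> semigrp A \<Longrightarrow> a \<in> A \<Longrightarrow> g * gamma a \<in> semigrp A"

text \<open>Lower-right entries <gamma e2, e2>.\<close>
definition Dset :: "nat set \<Rightarrow> int set" where
  "Dset A = {g $$ (1, 1) | g. g \<in> semigrp A}"

definition admissible :: "nat set \<Rightarrow> int \<Rightarrow> bool" where
  "admissible A d \<longleftrightarrow> (\<forall>q::nat. q > 0 \<longrightarrow> (\<exists>x \<in> Dset A. [x = d] (mod int q)))"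

definition no_local_obstructions :: "nat set \<Rightarrow> bool" where
  "no_local_obstructions A \<longleftrightarrow> (\<forall>d::int. admissible A d)"

end

theory Submission imports Defs begin

text \<open>
  Split the modulus as \<open>q = q\<^sub>1 q\<^sub>2\<close> with \<open>q\<^sub>1 | k\<^sup>n\<close> and \<open>q\<^sub>2\<close> coprime to \<open>k\<close>.
  The lower-right entry of \<open>\<gamma>\<^sub>a\<^sub>1 \<cdots> \<gamma>\<^sub>a\<^sub>m\<close> depends on the letters \<open>a\<^sub>i\<close> only modulo the
  modulus, so by the Chinese remainder theorem each letter of a word reaching \<open>d\<close>
  modulo \<open>k\<^sup>n\<close> may be changed modulo \<open>q\<^sub>2\<close> at will without leaving the residue class
  \<open>r\<close> modulo \<open>k\<close>. Modulo \<open>q\<^sub>2\<close> the letters are then unconstrained, and words of any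
  length over all of \<open>\<nat>\<close> reach every residue.
\<close>

type_synonym quad = "int \<times> int \<times> int \<times> int"

definition quad_mat :: "quad \<Rightarrow> int mat" where
  "quad_mat T = (case T of (p, q, s, t) \<Rightarrow> mat_of_rows_list 2 [[p, q], [s, t]])"

fun times_gamma :: "quad \<Rightarrow> nat \<Rightarrow> quad" where
  "times_gamma (p, q, s, t) a = (q, p + int a * q, t, s + int a * t)"

definition word_quad :: "nat list \<Rightarrow> quad" where
  "word_quad as = foldl times_gamma (1, 0, 0, 1) as"

definition word_corner :: "nat list \<Rightarrow> int" where
  "word_corner as = snd (snd (snd (word_quad as)))"

lemma quad_mat_times_gamma: "quad_mat T * gamma a = quad_mat (times_gamma T a)"
proof -
  obtain p q s t where T: "T = (p, q, s, t)" by (cases T) auto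
  show ?thesis unfolding T
    by (rule eq_matI)
      (auto simp: quad_mat_def gamma_def mat_of_rows_list_def scalar_prod_def
        less_2_cases_iff less_Suc_eq algebra_simps)
qed

lemma gamma_eq_quad_mat: "gamma a = quad_mat (word_quad [a])"
  by (rule eq_matI)
    (auto simp: word_quad_def quad_mat_def gamma_def mat_of_rows_list_def less_2_cases_iff)

lemma quad_mat_word_quad_snoc: "quad_mat (word_quad (as @ [a])) = quad_mat (word_quad as) * gamma a"
  by (simp add: word_quad_def quad_mat_times_gamma)

lemma lower_right_quad_mat: "quad_mat T $$ (1, 1) = snd (snd (snd T))"
  by (cases T) (simp add: quad_mat_def mat_of_rows_list_def)

lemma semigrp_eq_words: "semigrp A = {quad_mat (word_quad as) | as. as \<noteq> [] \<and> set as \<subseteq> A}"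
proof (intro equalityI subsetI)
  fix g assume "g \<in> semigrp A"
  then show "g \<in> {quad_mat (word_quad as) | as. as \<noteq> [] \<and> set as \<subseteq> A}"
  proof induction
    case (gen a)
    then show ?case by (intro CollectI exI[of _ "[a]"]) (simp add: gamma_eq_quad_mat)
  next
    case (step g a)
    then obtain as where "as \<noteq> []" "set as \<subseteq> A" "g = quad_mat (word_quad as)" by blast
    with step show ?case
      by (intro CollectI exI[of _ "as @ [a]"]) (simp add: quad_mat_word_quad_snoc)
  qed
next
  fix g assume "g \<in> {quad_mat (word_quad as) | as. as \<noteq> [] \<and> set as \<subseteq> A}"
  then obtain as where "as \<noteq> []" "set as \<subseteq> A" and g: "g = quad_mat (word_quad as)" by blast
  then show "g \<in> semigrp A" unfolding g
  proof (induction as rule: rev_induct)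
    case (snoc a as)
    show ?case
    proof (cases "as = []")
      case True
      then show ?thesis using snoc.prems by (simp add: gamma_eq_quad_mat[symmetric] semigrp.gen)
    next
      case False
      then show ?thesis using snoc by (simp add: quad_mat_word_quad_snoc semigrp.step)
    qed
  qed simp
qed

lemma Dset_eq_word_corners: "Dset A = {word_corner as | as. as \<noteq> [] \<and> set as \<subseteq> A}"
  unfolding Dset_def semigrp_eq_words word_corner_def lower_right_quad_mat[symmetric] by blast

definition quad_cong :: "int \<Rightarrow> quad \<Rightarrow> quad \<Rightarrow> bool" where
  "quad_cong M T U = (case T of (p, q, s, t) \<Rightarrow> case U of (p', q', s', t') \<Rightarrow>
     [p = p'] (mod M) \<and> [q = q'] (mod M) \<and> [s = s'] (mod M) \<and> [t = t'] (mod M))"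

lemma quad_cong_times_gamma:
  assumes "quad_cong M T U" and "[int a = int b] (mod M)"
  shows "quad_cong M (times_gamma T a) (times_gamma U b)"
  using assms by (cases T, cases U) (simp add: quad_cong_def cong_add cong_mult)

lemma quad_cong_foldl_times_gamma:
  assumes "list_all2 (\<lambda>a b. [int a = int b] (mod M)) as bs" and "quad_cong M T U"
  shows "quad_cong M (foldl times_gamma T as) (foldl times_gamma U bs)"
  using assms
  by (induction as bs arbitrary: T U rule: list_all2_induct) (auto simp: quad_cong_times_gamma)

lemma word_corner_cong:
  assumes "list_all2 (\<lambda>a b. [a = b] (mod M)) as bs"
  shows "[word_corner as = word_corner bs] (mod int M)"
proof -
  have "list_all2 (\<lambda>a b. [int a = int b] (mod int M)) as bs"
    using assms by (simp add: cong_int_iff)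
  then have "quad_cong (int M) (word_quad as) (word_quad bs)"
    unfolding word_quad_def by (rule quad_cong_foldl_times_gamma) (simp add: quad_cong_def)
  then show ?thesis
    by (cases "word_quad as", cases "word_quad bs") (simp add: quad_cong_def word_corner_def)
qed

lemma word_quad_zeros: "word_quad (replicate j 0) = (if even j then (1, 0, 0, 1) else (0, 1, 1, 0))"
proof (induction j)
  case (Suc j)
  have "replicate (Suc j) (0::nat) = replicate j 0 @ [0]" by (simp add: replicate_append_same)
  with Suc show ?case by (simp add: word_quad_def)
qed (simp add: word_quad_def)

lemma cong_int_nat_mod:
  fixes d :: int and Q :: nat
  assumes "Q > 0"
  shows "[int (nat (d mod int Q)) = d] (mod int Q)"
  using assms by (simp add: cong_def)

text \<open>The witness is \<open>[y]\<close> for length one and \<open>0\<^sup>j 1 y\<close> otherwise, whose lower-right entry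
  is \<open>1 + y\<close> or \<open>y\<close> according to the parity of \<open>j\<close>.\<close>
lemma word_corner_hits_every_residue:
  fixes m Q :: nat and d :: int
  assumes "m \<ge> 1" and "Q > 0"
  shows "\<exists>cs. length cs = m \<and> [word_corner cs = d] (mod int Q)"
proof (cases "m = 1")
  case True
  define y where "y = nat (d mod int Q)"
  have "word_corner [y] = int y" by (simp add: word_corner_def word_quad_def)
  then show ?thesis
    using True cong_int_nat_mod[OF assms(2)] by (intro exI[of _ "[y]"]) (simp add: y_def)
next
  case False
  define j where "j = m - 2"
  define e :: int where "e = (if even j then 1 else 0)"
  define y where "y = nat ((d - e) mod int Q)"
  have "word_quad (replicate j 0 @ [1, y]) =
      foldl times_gamma (if even j then (1, 0, 0, 1) else (0, 1, 1, 0)) [1, y]"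
    by (simp only: word_quad_def foldl_append word_quad_zeros[unfolded word_quad_def])
  then have "word_corner (replicate j 0 @ [1, y]) = e + int y"
    by (simp add: word_corner_def e_def)
  moreover have "[e + int y = e + (d - e)] (mod int Q)"
    using cong_int_nat_mod[OF assms(2)] by (intro cong_add) (simp_all add: y_def)
  ultimately show ?thesis
    using False assms(1) by (intro exI[of _ "replicate j 0 @ [1, y]"]) (simp add: j_def)
qed

lemma exists_pos_chinese_remainder:
  fixes M N b c :: nat
  assumes "coprime M N" and "M > 0" and "N > 0"
  shows "\<exists>e > 0. [e = b] (mod M) \<and> [e = c] (mod N)"
proof -
  obtain e where e: "[e = b] (mod M)" "[e = c] (mod N)"
    using binary_chinese_remainder_nat[OF assms(1)] by blast
  have "[e + M * N = e] (mod M)" "[e + M * N = e] (mod N)" by (simp_all add: cong_def)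
  with e assms(2,3) show ?thesis
    by (intro exI[of _ "e + M * N"]) (auto intro: cong_trans)
qed

lemma exists_chinese_remainder_word:
  fixes M N :: nat
  assumes "coprime M N" and "M > 0" and "N > 0" and "length bs = length cs"
  shows "\<exists>es. list_all2 (\<lambda>e b. e > 0 \<and> [e = b] (mod M)) es bs
            \<and> list_all2 (\<lambda>e c. [e = c] (mod N)) es cs"
  using assms(4)
proof (induction bs cs rule: list_induct2)
  case (Cons b bs c cs)
  obtain es where "list_all2 (\<lambda>e b. e > 0 \<and> [e = b] (mod M)) es bs"
      "list_all2 (\<lambda>e c. [e = c] (mod N)) es cs"
    using Cons.IH by blast
  moreover obtain e where "e > 0" "[e = b] (mod M)" "[e = c] (mod N)"
    using exists_pos_chinese_remainder[OF assms(1-3)] by blast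
  ultimately show ?case by (intro exI[of _ "e # es"]) simp
qed simp

lemma Dset_residue_class_adjust:
  fixes k r M N :: nat and x d :: int
  defines "A \<equiv> {a. a > 0 \<and> [a = r] (mod k)}"
  assumes "coprime M N" and "M > 0" and "N > 0" and "k dvd M" and "x \<in> Dset A"
  shows "\<exists>y \<in> Dset A. [y = x] (mod int M) \<and> [y = d] (mod int N)"
proof -
  obtain bs where bs: "bs \<noteq> []" "set bs \<subseteq> A" and x: "x = word_corner bs"
    using assms(6) unfolding Dset_eq_word_corners by blast
  have "length bs \<ge> 1" using bs(1) by (simp add: Suc_le_eq)
  then obtain cs where cs: "length cs = length bs" "[word_corner cs = d] (mod int N)"
    using word_corner_hits_every_residue assms(4) by blast
  obtain es where es_bs: "list_all2 (\<lambda>e b. e > 0 \<and> [e = b] (mod M)) es bs"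
      and es_cs: "list_all2 (\<lambda>e c. [e = c] (mod N)) es cs"
    using exists_chinese_remainder_word[OF assms(2-4) cs(1)[symmetric]] by blast
  have "set es \<subseteq> A"
  proof
    fix e assume "e \<in> set es"
    then obtain i where i: "i < length es" "e = es ! i" by (auto simp: in_set_conv_nth)
    define b where "b = bs ! i"
    have b: "b \<in> A" "e > 0" "[e = b] (mod M)"
      using i list_all2_nthD[OF es_bs] list_all2_lengthD[OF es_bs] bs(2) by (auto simp: b_def)
    have "[e = b] (mod k)" using b(3) assms(5) by (rule cong_dvd_modulus_nat)
    then have "[e = r] (mod k)" using b(1) unfolding A_def by (blast intro: cong_trans)
    with b(2) show "e \<in> A" unfolding A_def by blast
  qed
  moreover have "es \<noteq> []" using es_bs bs(1) by (cases es) auto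
  ultimately have "word_corner es \<in> Dset A" unfolding Dset_eq_word_corners by blast
  moreover have "list_all2 (\<lambda>e b. [e = b] (mod M)) es bs"
    using es_bs by (rule list_all2_mono) simp
  then have "[word_corner es = x] (mod int M)" unfolding x by (rule word_corner_cong)
  moreover have "[word_corner es = d] (mod int N)"
    using word_corner_cong[OF es_cs] cs(2) by (rule cong_trans)
  ultimately show ?thesis by blast
qed

lemma factor_coprime_part:
  fixes q k :: nat
  assumes "q > 0"
  shows "\<exists>q1 q2. q = q1 * q2 \<and> coprime q2 k \<and> q1 dvd k ^ q"
  using assms
proof (induction q rule: less_induct)
  case (less q)
  show ?case
  proof (cases "coprime q k")
    case True
    then show ?thesis by (intro exI[of _ 1] exI[of _ q]) simp
  next
    case False
    then obtain c where c: "c dvd q" "c dvd k" "\<not> is_unit c" by (rule not_coprimeE)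
    then obtain q' where q': "q = c * q'" by (auto elim: dvdE)
    have "q' > 0" and "c \<ge> 2" using q' c(3) less.prems by (auto simp: le_def less_2_cases_iff)
    then have "q' < q" using q' by simp
    then obtain q1 q2 where h: "q' = q1 * q2" "coprime q2 k" "q1 dvd k ^ q'"
      using less.IH \<open>q' > 0\<close> by blast
    have "c * q1 dvd k ^ Suc q'" using c(2) h(3) by (simp add: mult_dvd_mono)
    also have "\<dots> dvd k ^ q" using \<open>q' < q\<close> by (intro le_imp_power_dvd) simp
    finally show ?thesis using h q' by (intro exI[of _ "c * q1"] exI[of _ q2]) (simp add: ac_simps)
  qed
qed

theorem lemmaB8:
  fixes k r :: nat
  assumes "k \<ge> 2" and "0 < r" and "r \<le> k"
    and "\<forall>n::nat. n \<ge> 1 \<longrightarrow> (\<forall>d::int. \<exists>x \<in> Dset {a. a > 0 \<and> [a = r] (mod k)}. [x = d] (mod int (k ^ n)))"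
  shows "no_local_obstructions {a. a > 0 \<and> [a = r] (mod k)}"
  unfolding no_local_obstructions_def admissible_def
proof (intro allI impI)
  fix d :: int and q :: nat
  assume "q > 0"
  then obtain q1 q2 where q: "q = q1 * q2" "coprime q2 k" "q1 dvd k ^ q"
    using factor_coprime_part by blast
  have "q1 dvd k ^ Suc q" using q(3) by (simp add: dvd_mult2)
  have "coprime (k ^ Suc q) q2" using q(2) by (simp add: ac_simps)
  then have "coprime q1 q2" using \<open>q1 dvd k ^ Suc q\<close> coprime_imp_coprime dvd_trans by blast
  obtain x where x: "x \<in> Dset {a. a > 0 \<and> [a = r] (mod k)}" "[x = d] (mod int (k ^ Suc q))"
    using assms(4)[rule_format, of "Suc q" d] by auto
  have "k ^ Suc q > 0" and "q2 > 0" and "k dvd k ^ Suc q" using assms(1) \<open>q > 0\<close> q(1) by auto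
  then obtain y where y: "y \<in> Dset {a. a > 0 \<and> [a = r] (mod k)}"
      "[y = x] (mod int (k ^ Suc q))" "[y = d] (mod int q2)"
    using Dset_residue_class_adjust[OF \<open>coprime (k ^ Suc q) q2\<close> _ _ _ x(1)] by blast
  have "[y = d] (mod int q1)"
    using cong_trans[OF y(2) x(2)] \<open>q1 dvd k ^ Suc q\<close> by (metis cong_dvd_modulus of_nat_dvd_iff)
  then have "[y = d] (mod int q1 * int q2)"
    using coprime_cong_mult y(3) \<open>coprime q1 q2\<close> by (metis coprime_int_iff)
  then show "\<exists>x\<in>Dset {a. 0 < a \<and> [a = r] (mod k)}. [x = d] (mod int q)"
    using y(1) q(1) by auto
qed

end
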